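(* Let $G=\mathbb R^2\times SL(2,\mathbb C)$ be the simply connected Lie group with Lie algebra $2\mathbb R\oplus\mathfrak{sl}(2,\mathbb C)$. Let $\Delta\subset SL(2,\mathbb C)$ be a cocompact discrete subgroup, and let $\Gamma=\mathbb Z\times\mathbb Z\times\Delta\subset G$. Then the compact manifold $G/\Gamma$ admits an invariant strong HPKT structure.
   Context: An almost hyper-paracomplex structure on a manifold is a triple $(J_1,J_2,J_3)$ of endomorphisms of the tangent bundle with $J_1^2=J_2^2=\mathrm{id}$, $J_3^2=-\mathrm{id}$ and $J_1J_2=-J_2J_1=J_3$. It is hyper-paracomplex if each $J_a$ has vanishing Nijenhuis tensor. A metric $g$ is hyperparahermitian if $g(J_1X,J_1Y)=g(J_2X,J_2Y)=-g(J_3X,J_3Y)=-g(X,Y)$. An HPKT structure is a hyper-paracomplex structure together with a hyperparahermitian metric admitting a linear connection $\nabla$ with $\nabla g=\nabla J_a=0$ ($a=1,2,3$) and totally skew-symmetric torsion, i.e. $T^\nabla(X,Y,Z):=g(T^\nabla(X,Y),Z)$ is a 3-form. It is strong if $dT^\nabla=0$. "Invariant" on $G/\Gamma$ means induced by left-invariant structures on $G$, where $\Gamma$ acts by left translations. *)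

theory Defs
  imports "HOL-Analysis.Analysis"
begin

definition SL2C :: "(complex^2^2) set" where
  "SL2C = {M. det M = 1}"

definition is_subgroup_SL2C :: "(complex^2^2) set \<Rightarrow> bool" where
  "is_subgroup_SL2C D \<longleftrightarrow> D \<subseteq> SL2C \<and> mat 1 \<in> D \<and>
     (\<forall>a\<in>D. \<forall>b\<in>D. a ** b \<in> D) \<and> (\<forall>a\<in>D. matrix_inv a \<in> D)"

definition discrete_set :: "(complex^2^2) set \<Rightarrow> bool" where
  "discrete_set D \<longleftrightarrow> (\<forall>a\<in>D. \<exists>e>0. \<forall>b\<in>D. dist b a < e \<longrightarrow> b = a)"

text \<open>Cocompact: the quotient by the left action of D is compact, i.e. SL(2,C) = D K
  for some compact K.\<close>
definition cocompact_SL2C :: "(complex^2^2) set \<Rightarrow> bool" where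
  "cocompact_SL2C D \<longleftrightarrow> (\<exists>K. compact K \<and> K \<subseteq> SL2C \<and>
      SL2C = {d ** k | d k. d \<in> D \<and> k \<in> K})"

type_synonym lie = "real \<times> real \<times> (complex^2^2)"

definition gL :: "lie set" where
  "gL = {(a, b, M). trace M = 0}"

definition brk :: "lie \<Rightarrow> lie \<Rightarrow> lie" where
  "brk x y = (case x of (a, b, M) \<Rightarrow> case y of (a', b', M') \<Rightarrow> (0, 0, M ** M' - M' ** M))"

definition endo :: "(lie \<Rightarrow> lie) \<Rightarrow> bool" where
  "endo J \<longleftrightarrow> linear J \<and> J ` gL \<subseteq> gL"

definition nijenhuis :: "(lie \<Rightarrow> lie) \<Rightarrow> lie \<Rightarrow> lie \<Rightarrow> lie" where
  "nijenhuis J X Y = brk (J X) (J Y) - J (brk (J X) Y) - J (brk X (J Y)) + J (J (brk X Y))"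

definition almost_hpc :: "(lie \<Rightarrow> lie) \<Rightarrow> (lie \<Rightarrow> lie) \<Rightarrow> (lie \<Rightarrow> lie) \<Rightarrow> bool" where
  "almost_hpc J1 J2 J3 \<longleftrightarrow> endo J1 \<and> endo J2 \<and> endo J3 \<and>
     (\<forall>X\<in>gL. J1 (J1 X) = X \<and> J2 (J2 X) = X \<and> J3 (J3 X) = - X \<and>
              J1 (J2 X) = J3 X \<and> J2 (J1 X) = - J3 X)"

definition hpc :: "(lie \<Rightarrow> lie) \<Rightarrow> (lie \<Rightarrow> lie) \<Rightarrow> (lie \<Rightarrow> lie) \<Rightarrow> bool" where
  "hpc J1 J2 J3 \<longleftrightarrow> almost_hpc J1 J2 J3 \<and>
     (\<forall>J\<in>{J1, J2, J3}. \<forall>X\<in>gL. \<forall>Y\<in>gL. nijenhuis J X Y = 0)"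

definition metric :: "(lie \<Rightarrow> lie \<Rightarrow> real) \<Rightarrow> bool" where
  "metric g \<longleftrightarrow> bilinear g \<and> (\<forall>X\<in>gL. \<forall>Y\<in>gL. g X Y = g Y X) \<and>
     (\<forall>X\<in>gL. (\<forall>Y\<in>gL. g X Y = 0) \<longrightarrow> X = 0)"

definition hyperparahermitian ::
  "(lie \<Rightarrow> lie) \<Rightarrow> (lie \<Rightarrow> lie) \<Rightarrow> (lie \<Rightarrow> lie) \<Rightarrow> (lie \<Rightarrow> lie \<Rightarrow> real) \<Rightarrow> bool" where
  "hyperparahermitian J1 J2 J3 g \<longleftrightarrow> metric g \<and>
     (\<forall>X\<in>gL. \<forall>Y\<in>gL. g (J1 X) (J1 Y) = - g X Y \<and> g (J2 X) (J2 Y) = - g X Y \<and>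
                      - g (J3 X) (J3 Y) = - g X Y)"

text \<open>Left-invariant linear connection: nab X Y is the covariant derivative nabla_X Y of
  left-invariant fields; it is an arbitrary bilinear map gL x gL -> gL.\<close>
definition inv_connection :: "(lie \<Rightarrow> lie \<Rightarrow> lie) \<Rightarrow> bool" where
  "inv_connection nab \<longleftrightarrow> bilinear nab \<and> (\<forall>X\<in>gL. \<forall>Y\<in>gL. nab X Y \<in> gL)"

definition torsion :: "(lie \<Rightarrow> lie \<Rightarrow> lie) \<Rightarrow> lie \<Rightarrow> lie \<Rightarrow> lie" where
  "torsion nab X Y = nab X Y - nab Y X - brk X Y"

definition torsion3 :: "(lie \<Rightarrow> lie \<Rightarrow> real) \<Rightarrow> (lie \<Rightarrow> lie \<Rightarrow> lie) \<Rightarrow> lie \<Rightarrow> lie \<Rightarrow> lie \<Rightarrow> real" where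
  "torsion3 g nab X Y Z = g (torsion nab X Y) Z"

text \<open>Exterior derivative of a left-invariant 3-form (Chevalley--Eilenberg formula).\<close>
definition d3 :: "(lie \<Rightarrow> lie \<Rightarrow> lie \<Rightarrow> real) \<Rightarrow> lie \<Rightarrow> lie \<Rightarrow> lie \<Rightarrow> lie \<Rightarrow> real" where
  "d3 w X0 X1 X2 X3 =
     - w (brk X0 X1) X2 X3 + w (brk X0 X2) X1 X3 - w (brk X0 X3) X1 X2
     - w (brk X1 X2) X0 X3 + w (brk X1 X3) X0 X2 - w (brk X2 X3) X0 X1"

definition HPKT_connection ::
  "(lie \<Rightarrow> lie) \<Rightarrow> (lie \<Rightarrow> lie) \<Rightarrow> (lie \<Rightarrow> lie) \<Rightarrow> (lie \<Rightarrow> lie \<Rightarrow> real) \<Rightarrow> (lie \<Rightarrow> lie \<Rightarrow> lie) \<Rightarrow> bool" where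
  "HPKT_connection J1 J2 J3 g nab \<longleftrightarrow> inv_connection nab \<and>
     (\<forall>Z\<in>gL. \<forall>X\<in>gL. \<forall>Y\<in>gL. g (nab Z X) Y + g X (nab Z Y) = 0) \<and>
     (\<forall>J\<in>{J1, J2, J3}. \<forall>Z\<in>gL. \<forall>X\<in>gL. nab Z (J X) = J (nab Z X)) \<and>
     (\<forall>X\<in>gL. \<forall>Y\<in>gL. \<forall>Z\<in>gL.
        torsion3 g nab X Y Z = - torsion3 g nab Y X Z \<and>
        torsion3 g nab X Y Z = - torsion3 g nab X Z Y)"

text \<open>Left-invariant strong HPKT structure on G = R^2 x SL(2,C); it descends to an invariant
  strong HPKT structure on the quotient by Gamma (Gamma acting by left translations).\<close>
definition inv_strong_HPKT ::
  "(lie \<Rightarrow> lie) \<Rightarrow> (lie \<Rightarrow> lie) \<Rightarrow> (lie \<Rightarrow> lie) \<Rightarrow> (lie \<Rightarrow> lie \<Rightarrow> real) \<Rightarrow> bool" where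
  "inv_strong_HPKT J1 J2 J3 g \<longleftrightarrow> hpc J1 J2 J3 \<and> hyperparahermitian J1 J2 J3 g \<and>
     (\<exists>nab. HPKT_connection J1 J2 J3 g nab \<and>
        (\<forall>X0\<in>gL. \<forall>X1\<in>gL. \<forall>X2\<in>gL. \<forall>X3\<in>gL. d3 (torsion3 g nab) X0 X1 X2 X3 = 0))"

end

theory Submission imports Defs begin

(* Identify 2R + sl(2,C) with gl(2,C) via (a, b, M) |-> (a + i b) I + M, so that the bracket
   becomes the matrix commutator. Right multiplication by A1 = diag(1, -1) and
   A2 = [[0, 1], [1, 0]], which satisfy A1^2 = A2^2 = 1 and A1 A2 = - A2 A1, is a hyper-paracomplex
   structure: the Nijenhuis tensor of a right multiplication vanishes identically in any
   associative algebra. The metric Re (tr x tr y - tr (x y)) is ad-invariant and changes sign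
   under right multiplication by A1 and A2, both of determinant -1. The connection with
   nabla_X Y = 0 on left-invariant fields preserves every left-invariant tensor; its torsion
   -[X, Y] yields the Cartan 3-form, totally skew by ad-invariance and closed by the Jacobi
   identity. The structure is left-invariant on G. *)

definition commutator :: "'a::comm_ring_1^'n^'n \<Rightarrow> 'a^'n^'n \<Rightarrow> 'a^'n^'n" where
  "commutator x y = x ** y - y ** x"

lemma matrix_add_rdistrib: "(A + B) ** C = A ** C + B ** C"
  by (vector matrix_matrix_mult_def sum.distrib[symmetric] field_simps)

lemma matrix_diff_ldistrib:
  fixes A :: "'a::ring_1^'n^'m"
  shows "A ** (B - C) = A ** B - A ** C"
  by (vector matrix_matrix_mult_def sum_subtractf[symmetric] field_simps)

lemma matrix_diff_rdistrib:
  fixes A :: "'a::ring_1^'n^'m"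
  shows "(A - B) ** C = A ** C - B ** C"
  by (vector matrix_matrix_mult_def sum_subtractf[symmetric] field_simps)

lemma matrix_mul_uminus_left:
  fixes A :: "'a::ring_1^'n^'m"
  shows "(- A) ** B = - (A ** B)"
  by (metis diff_0 matrix_diff_rdistrib times0_left)

lemma matrix_mul_uminus_right:
  fixes A :: "'a::ring_1^'n^'m"
  shows "A ** (- B) = - (A ** B)"
  by (metis diff_0 matrix_diff_ldistrib times0_right)

lemma commutator_antisym: "commutator y x = - commutator x y"
  by (simp add: commutator_def)

lemma commutator_uminus_right: "commutator x (- y) = - commutator x y"
  by (simp add: commutator_def matrix_mul_uminus_left matrix_mul_uminus_right)

lemma commutator_jacobi:
  "commutator x (commutator y z) + commutator y (commutator z x) + commutator z (commutator x y) = 0"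
  by (simp add: commutator_def matrix_diff_ldistrib matrix_diff_rdistrib matrix_mul_assoc)

lemma commutator_mult_right_nijenhuis:
  "commutator (x ** A) (y ** A) - commutator (x ** A) y ** A - commutator x (y ** A) ** A
     + commutator x y ** A ** A = 0"
  by (simp add: commutator_def matrix_diff_rdistrib matrix_mul_assoc)

lemma trace_commutator: "trace (commutator x y) = 0"
  by (simp add: commutator_def trace_sub trace_mul_sym[of x y])

lemma trace_commutator_mult: "trace (commutator x y ** z) = trace (x ** commutator y z)"
  by (simp add: commutator_def matrix_diff_ldistrib matrix_diff_rdistrib trace_sub
      matrix_mul_assoc)
     (metis matrix_mul_assoc trace_mul_sym)

lemma trace_scaleR:
  fixes A :: "'a::{real_algebra_1,comm_ring_1}^'n^'n"
  shows "trace (r *\<^sub>R A) = r *\<^sub>R trace A"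
  by (simp add: trace_def scaleR_sum_right)

(* On 2 x 2 matrices det (x + y) = det x + det_form x y + det y: det_form is the polarized
   determinant, which is why it scales by det A under right multiplication by A. *)
definition det_form :: "'a::comm_ring_1^'n^'n \<Rightarrow> 'a^'n^'n \<Rightarrow> 'a" where
  "det_form x y = trace x * trace y - trace (x ** y)"

lemma det_form_sym: "det_form x y = det_form y x"
  by (simp add: det_form_def trace_mul_sym[of x y] mult.commute)

lemma det_form_commutator: "det_form (commutator x y) z = det_form x (commutator y z)"
  by (simp add: det_form_def trace_commutator trace_commutator_mult)

lemma det_form_add_left: "det_form (x + y) z = det_form x z + det_form y z"
  by (simp add: det_form_def trace_add matrix_add_rdistrib algebra_simps)

lemma det_form_scaleR_left:
  fixes x :: "'a::{real_algebra_1,comm_ring_1}^'n^'n"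
  shows "det_form (r *\<^sub>R x) y = r *\<^sub>R det_form x y"
  by (simp add: det_form_def trace_scaleR scalar_matrix_assoc[symmetric] algebra_simps)

lemmas matrix2_simps = vec_eq_iff forall_2 matrix_matrix_mult_def sum_2 mat_def trace_def det_2

lemma det_form_mult_right:
  fixes A :: "'a::comm_ring_1^2^2"
  shows "det_form (x ** A) (y ** A) = det A * det_form x y"
  by (simp add: det_form_def matrix2_simps algebra_simps)

definition cnj_transpose :: "complex^'n^'n \<Rightarrow> complex^'n^'n" where
  "cnj_transpose x = (\<chi> i j. cnj (x $ j $ i))"

lemma det_form_cnj_transpose:
  fixes x :: "complex^2^2"
  shows "det_form x (mat (trace (cnj_transpose x)) - cnj_transpose x)
    = of_real (\<Sum>i\<in>UNIV. \<Sum>j\<in>UNIV. (cmod (x $ i $ j))\<^sup>2)"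
  by (simp add: det_form_def cnj_transpose_def matrix2_simps algebra_simps
      flip: complex_norm_square)

definition to_gl :: "lie \<Rightarrow> complex^2^2" where
  "to_gl X = (case X of (a, b, M) \<Rightarrow> mat (Complex a b) + M)"

definition of_gl :: "complex^2^2 \<Rightarrow> lie" where
  "of_gl N = (Re (trace N / 2), Im (trace N / 2), N - mat (trace N / 2))"

lemma to_gl_of_gl [simp]: "to_gl (of_gl N) = N"
  by (simp add: to_gl_def of_gl_def matrix2_simps complex_eq_iff)

lemma of_gl_to_gl: "X \<in> gL \<Longrightarrow> of_gl (to_gl X) = X"
  by (auto simp: to_gl_def of_gl_def matrix2_simps gL_def complex_eq_iff)

lemma of_gl_in_gL: "of_gl N \<in> gL"
  by (simp add: of_gl_def gL_def matrix2_simps)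

lemma linear_to_gl: "linear to_gl"
  by (rule linearI)
     (auto simp: to_gl_def matrix2_simps complex_eq_iff algebra_simps split: prod.splits)

lemma linear_of_gl: "linear of_gl"
  by (rule linearI) (auto simp: of_gl_def matrix2_simps complex_eq_iff field_simps)

lemma brk_eq_of_gl: "brk X Y = of_gl (commutator (to_gl X) (to_gl Y))"
  by (auto simp: brk_def to_gl_def of_gl_def commutator_def matrix2_simps complex_eq_iff
      algebra_simps split: prod.splits)

lemma to_gl_brk: "to_gl (brk X Y) = commutator (to_gl X) (to_gl Y)"
  by (simp add: brk_eq_of_gl)

lemma brk_antisym: "brk Y X = - brk X Y"
  by (simp add: brk_eq_of_gl commutator_antisym[of "to_gl X"] linear_neg[OF linear_of_gl])

lemma brk_uminus_right: "brk X (- Y) = - brk X Y"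
  by (simp add: brk_eq_of_gl linear_neg[OF linear_to_gl] linear_neg[OF linear_of_gl]
      commutator_uminus_right)

lemma brk_jacobi: "brk X (brk Y Z) + brk Y (brk Z X) + brk Z (brk X Y) = 0"
  by (simp add: brk_eq_of_gl commutator_jacobi linear_add[OF linear_of_gl, symmetric]
      linear_0[OF linear_of_gl])

definition right_mult :: "complex^2^2 \<Rightarrow> lie \<Rightarrow> lie" where
  "right_mult A X = of_gl (to_gl X ** A)"

lemma linear_right_mult: "linear (right_mult A)"
proof -
  have "linear (\<lambda>N::complex^2^2. N ** A)"
    by (rule linearI) (simp_all add: matrix_add_rdistrib scalar_matrix_assoc)
  moreover have "right_mult A = of_gl \<circ> (\<lambda>N. N ** A) \<circ> to_gl"
    by (auto simp: right_mult_def)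
  ultimately show ?thesis
    using linear_to_gl linear_of_gl by (metis linear_compose)
qed

lemma endo_right_mult: "endo (right_mult A)"
  using linear_right_mult of_gl_in_gL by (auto simp: endo_def right_mult_def)

lemma right_mult_right_mult: "right_mult A (right_mult B X) = right_mult (B ** A) X"
  by (simp add: right_mult_def matrix_mul_assoc)

lemma right_mult_one: "X \<in> gL \<Longrightarrow> right_mult (mat 1) X = X"
  by (simp add: right_mult_def of_gl_to_gl)

lemma right_mult_uminus: "right_mult (- A) X = - right_mult A X"
  by (simp add: right_mult_def matrix_mul_uminus_right linear_neg[OF linear_of_gl])

lemma nijenhuis_right_mult: "nijenhuis (right_mult A) X Y = 0"
proof -
  let ?x = "to_gl X" and ?y = "to_gl Y"
  have "nijenhuis (right_mult A) X Y = of_gl (commutator (?x ** A) (?y ** A)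
      - commutator (?x ** A) ?y ** A - commutator ?x (?y ** A) ** A + commutator ?x ?y ** A ** A)"
    by (simp add: nijenhuis_def right_mult_def brk_eq_of_gl linear_diff[OF linear_of_gl]
        linear_add[OF linear_of_gl])
  then show ?thesis
    by (simp add: commutator_mult_right_nijenhuis linear_0[OF linear_of_gl])
qed

lemma hpc_right_mult:
  assumes "A1 ** A1 = mat 1" and "A2 ** A2 = mat 1" and "A1 ** A2 = - (A2 ** A1)"
  shows "hpc (right_mult A1) (right_mult A2) (right_mult (A2 ** A1))"
proof -
  have "(A2 ** A1) ** (A2 ** A1) = A2 ** (A1 ** A2) ** A1"
    by (simp add: matrix_mul_assoc)
  also have "\<dots> = - ((A2 ** A2) ** (A1 ** A1))"
    using assms(3) by (simp add: matrix_mul_uminus_left matrix_mul_uminus_right matrix_mul_assoc)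
  finally have A3: "(A2 ** A1) ** (A2 ** A1) = - mat 1"
    using assms(1,2) by simp
  have "almost_hpc (right_mult A1) (right_mult A2) (right_mult (A2 ** A1))"
    unfolding almost_hpc_def
  proof (intro conjI ballI endo_right_mult)
    fix X assume "X \<in> gL"
    then show "right_mult A1 (right_mult A1 X) = X" "right_mult A2 (right_mult A2 X) = X"
      and "right_mult (A2 ** A1) (right_mult (A2 ** A1) X) = - X"
      and "right_mult A2 (right_mult A1 X) = - right_mult (A2 ** A1) X"
      using assms A3 by (simp_all only: right_mult_right_mult right_mult_uminus right_mult_one)
  qed (simp add: right_mult_right_mult)
  with nijenhuis_right_mult show ?thesis
    unfolding hpc_def by blast
qed

definition det_metric :: "lie \<Rightarrow> lie \<Rightarrow> real" where
  "det_metric X Y = Re (det_form (to_gl X) (to_gl Y))"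

lemma det_metric_sym: "det_metric X Y = det_metric Y X"
  by (simp add: det_metric_def det_form_sym[of "to_gl X"])

lemma bilinear_det_metric: "bilinear det_metric"
  unfolding bilinear_def
proof (intro allI conjI linearI)
  fix X Y Z :: lie and r :: real
  show "det_metric (X + Y) Z = det_metric X Z + det_metric Y Z"
    and "det_metric (r *\<^sub>R X) Z = r *\<^sub>R det_metric X Z"
    by (simp_all add: det_metric_def linear_add[OF linear_to_gl] linear_scale[OF linear_to_gl]
        det_form_add_left det_form_scaleR_left)
  then show "det_metric Z (X + Y) = det_metric Z X + det_metric Z Y"
    and "det_metric Z (r *\<^sub>R X) = r *\<^sub>R det_metric Z X"
    by (simp_all add: det_metric_sym[of Z])
qed

lemma metric_det_metric: "metric det_metric"
  unfolding metric_def
proof (intro conjI ballI impI bilinear_det_metric det_metric_sym)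
  fix X assume "X \<in> gL" and null: "\<forall>Y\<in>gL. det_metric X Y = 0"
  let ?x = "to_gl X"
  \<comment> \<open>paired with tr(x*) I - x*, det_form gives the squared Frobenius norm of x\<close>
  have "det_metric X (of_gl (mat (trace (cnj_transpose ?x)) - cnj_transpose ?x)) = 0"
    using null of_gl_in_gL by blast
  then have "(\<Sum>i\<in>UNIV. \<Sum>j\<in>UNIV. (cmod (?x $ i $ j))\<^sup>2) = 0"
    by (simp add: det_metric_def det_form_cnj_transpose)
  then have "?x = 0"
    by (simp add: sum_nonneg_eq_0_iff sum_nonneg vec_eq_iff)
  then show "X = 0"
    using \<open>X \<in> gL\<close> linear_of_gl by (metis linear_0 of_gl_to_gl)
qed

lemma det_metric_right_mult:
  assumes "det A = of_real c"
  shows "det_metric (right_mult A X) (right_mult A Y) = c * det_metric X Y"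
  using assms by (simp add: det_metric_def right_mult_def det_form_mult_right)

lemma hyperparahermitian_right_mult:
  assumes "det A1 = -1" and "det A2 = -1"
  shows "hyperparahermitian (right_mult A1) (right_mult A2) (right_mult (A2 ** A1)) det_metric"
  using assms det_metric_right_mult[of A1 "-1"] det_metric_right_mult[of A2 "-1"]
    det_metric_right_mult[of "A2 ** A1" 1]
  unfolding hyperparahermitian_def by (simp add: metric_det_metric det_mul)

definition ad_invariant :: "(lie \<Rightarrow> lie \<Rightarrow> real) \<Rightarrow> bool" where
  "ad_invariant g \<longleftrightarrow> (\<forall>X Y Z. g (brk X Y) Z = g X (brk Y Z))"

lemma ad_invariantD: "ad_invariant g \<Longrightarrow> g (brk X Y) Z = g X (brk Y Z)"
  unfolding ad_invariant_def by blast

lemma ad_invariant_det_metric: "ad_invariant det_metric"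
  unfolding ad_invariant_def det_metric_def to_gl_brk det_form_commutator by simp

lemma torsion3_zero_connection:
  "bilinear g \<Longrightarrow> torsion3 g (\<lambda>_ _. 0) X Y Z = - g (brk X Y) Z"
  by (simp add: torsion3_def torsion_def bilinear_lneg)

lemma HPKT_connection_zero:
  assumes "linear J1" and "linear J2" and "linear J3" and g: "bilinear g" "ad_invariant g"
  shows "HPKT_connection J1 J2 J3 g (\<lambda>_ _. 0)"
  unfolding HPKT_connection_def inv_connection_def
proof (intro conjI ballI)
  show "bilinear (\<lambda>(_::lie) (_::lie). 0::lie)"
    by (simp add: bilinear_def linear_zero)
  show "(0::lie) \<in> gL" for X Y :: lie
    by (simp add: gL_def zero_prod_def trace_def)
  show "g 0 Y + g X 0 = 0" for X Y
    using g(1) by (simp add: bilinear_lzero bilinear_rzero)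
  show "(0::lie) = J 0" if "J \<in> {J1, J2, J3}" for J
    using that assms(1-3) by (auto simp: linear_0)
  fix X Y Z
  show "torsion3 g (\<lambda>_ _. 0) X Y Z = - torsion3 g (\<lambda>_ _. 0) Y X Z"
    using g(1) by (simp add: torsion3_zero_connection brk_antisym[of X Y] bilinear_lneg)
  have "g (brk X Y) Z = - g (brk X Z) Y"
    using g(1) by (simp add: ad_invariantD[OF g(2)] brk_antisym[of Y Z] bilinear_rneg)
  then show "torsion3 g (\<lambda>_ _. 0) X Y Z = - torsion3 g (\<lambda>_ _. 0) X Z Y"
    using g(1) by (simp add: torsion3_zero_connection)
qed

lemma d3_torsion_zero_connection:
  assumes g: "bilinear g" "ad_invariant g" and sym: "\<And>X Y. g X Y = g Y X"
  shows "d3 (torsion3 g (\<lambda>_ _. 0)) X0 X1 X2 X3 = 0"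
proof -
  have inv: "g (brk (brk a b) c) d = g (brk a b) (brk c d)" for a b c d
    using g(2) by (simp add: ad_invariantD)
  have "d3 (torsion3 g (\<lambda>_ _. 0)) X0 X1 X2 X3 = 2 * (g (brk X0 X1) (brk X2 X3)
      - g (brk X0 X2) (brk X1 X3) + g (brk X0 X3) (brk X1 X2))"
    using g(1)
    by (simp add: d3_def torsion3_zero_connection inv sym[of "brk X1 X2"] sym[of "brk X1 X3"]
        sym[of "brk X2 X3"])
  also have "\<dots> = 2 * g X0 (brk X1 (brk X2 X3) + brk X2 (brk X3 X1) + brk X3 (brk X1 X2))"
    using g(1)
    by (simp add: ad_invariantD[OF g(2)] bilinear_radd bilinear_rneg brk_antisym[of X1 X3]
        brk_uminus_right)
  also have "\<dots> = 0"
    using g(1) by (simp add: brk_jacobi bilinear_rzero)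
  finally show ?thesis .
qed

definition A1 :: "complex^2^2" where
  "A1 = (\<chi> i j. if i = j then (if i = 1 then 1 else -1) else 0)"

definition A2 :: "complex^2^2" where
  "A2 = (\<chi> i j. if i = j then 0 else 1)"

theorem mainTheorem4:
  fixes \<Delta> :: "(complex^2^2) set"
  assumes "is_subgroup_SL2C \<Delta>" and "discrete_set \<Delta>" and "cocompact_SL2C \<Delta>"
  shows "\<exists>J1 J2 J3 g. inv_strong_HPKT J1 J2 J3 g"
proof -
  have "A1 ** A1 = mat 1" "A2 ** A2 = mat 1" "A1 ** A2 = - (A2 ** A1)"
    and "det A1 = -1" "det A2 = -1"
    by (simp_all add: A1_def A2_def matrix2_simps)
  then have "hpc (right_mult A1) (right_mult A2) (right_mult (A2 ** A1))"
    and "hyperparahermitian (right_mult A1) (right_mult A2) (right_mult (A2 ** A1)) det_metric"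
    by (simp_all add: hpc_right_mult hyperparahermitian_right_mult)
  moreover have "HPKT_connection (right_mult A1) (right_mult A2) (right_mult (A2 ** A1))
      det_metric (\<lambda>_ _. 0)"
    by (simp add: HPKT_connection_zero linear_right_mult bilinear_det_metric
        ad_invariant_det_metric)
  moreover have "d3 (torsion3 det_metric (\<lambda>_ _. 0)) X0 X1 X2 X3 = 0" for X0 X1 X2 X3
    by (simp add: d3_torsion_zero_connection bilinear_det_metric ad_invariant_det_metric
        det_metric_sym)
  ultimately show ?thesis
    unfolding inv_strong_HPKT_def by blast
qed

end
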